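(* In the $\{0,1\}$-speed SSP problem, for any constant $\epsilon>0$, the following partitioning algorithm is $(1+\epsilon)$-consistent and $2(1+\epsilon)$-robust: given the prediction $\hat m$ and processing times $p_1,\dots,p_n$, first use a PTAS with accuracy $\epsilon$ to partition the jobs into $\hat m$ subsets $F_1,\dots,F_{\hat m}$ (with $p(F_1)\ge\dots\ge p(F_{\hat m})$) whose maximum total processing time is at most $(1+\epsilon)opt(\mathbf p,\hat m)$; then partition each $F_i$ by the LPT algorithm into $\lfloor m/\hat m\rfloor$ or $\lceil m/\hat m\rceil$ bags, such that there are a total of $m$ bags; return these $m$ bags.
   Context: $\{0,1\}$-speed SSP: there are $n$ jobs with processing times $p_1,\dots,p_n\ge0$ and $m$ machines, each of which has speed either $0$ (unavailable) or $1$ (available). In the partitioning stage the algorithm knows $\mathbf p$, $m$ and a prediction $\hat m\in\{1,\dots,m\}$ of the number of available machines, and partitions the jobs into $m$ possibly empty bags; for a bag $B$, $p(B)=\sum_{j\in B}p_j$. In the scheduling stage the actual number $m_0\ge1$ of available machines is revealed and the bags are assigned whole to the $m_0$ identical unit-speed machines; the makespan is the maximum total processing time on a machine. $opt(\mathbf p,x)$ is the minimum makespan of scheduling the individual jobs on $x$ identical unit-speed machines. For a partitioning algorithm, $alg(\mathbf p,\hat m,m_0)$ is the makespan obtained by assigning its bags optimally to the $m_0$ machines. It is $c$-consistent if $alg(\mathbf p,m_0,m_0)\le c\cdot opt(\mathbf p,m_0)$ for all $\mathbf p,m_0$, and $\beta$-robust if $alg(\mathbf p,\hat m,m_0)\le\beta\cdot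 opt(\mathbf p,m_0)$ for all $\mathbf p,\hat m,m_0$. LPT partition of a job set into $k$ bags: consider the jobs in non-increasing order of processing time and put each job into a bag of currently minimum total processing time. *)

theory Defs
  imports Complex_Main "HOL-Library.FuncSet"
begin

definition load :: "(nat \<Rightarrow> real) \<Rightarrow> nat \<Rightarrow> (nat \<Rightarrow> nat) \<Rightarrow> nat \<Rightarrow> real" where
  "load p n a i = (\<Sum>j\<in>{j. j < n \<and> a j = i}. p j)"

definition makespan :: "(nat \<Rightarrow> real) \<Rightarrow> nat \<Rightarrow> nat \<Rightarrow> (nat \<Rightarrow> nat) \<Rightarrow> real" where
  "makespan p n x a = Max (load p n a ` {..<x})"

definition opt :: "(nat \<Rightarrow> real) \<Rightarrow> nat \<Rightarrow> nat \<Rightarrow> real" where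
  "opt p n x = Min ((\<lambda>a. makespan p n x a) ` ({..<n} \<rightarrow>\<^sub>E {..<x}))"

text \<open>Makespan obtained by assigning the m bags (bag j = bag of job j) optimally
  to m0 machines.\<close>
definition alg_value :: "(nat \<Rightarrow> real) \<Rightarrow> nat \<Rightarrow> nat \<Rightarrow> (nat \<Rightarrow> nat) \<Rightarrow> nat \<Rightarrow> real" where
  "alg_value p n m bag m0 =
     Min ((\<lambda>g. makespan p n m0 (g \<circ> bag)) ` ({..<m} \<rightarrow>\<^sub>E {..<m0}))"

text \<open>l restricted to the job set S is an LPT partition of S into k bags (any
  tie-breaking): there is an ordering of S by non-increasing processing time such
  that each job goes into a bag of currently minimum total processing time.\<close>
definition is_LPT :: "(nat \<Rightarrow> real) \<Rightarrow> nat set \<Rightarrow> nat \<Rightarrow> (nat \<Rightarrow> nat) \<Rightarrow> bool" where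
  "is_LPT p S k l \<longleftrightarrow>
     (\<forall>j\<in>S. l j < k) \<and>
     (\<exists>\<sigma>. distinct \<sigma> \<and> set \<sigma> = S \<and>
        (\<forall>t t'. t < t' \<and> t' < length \<sigma> \<longrightarrow> p (\<sigma> ! t) \<ge> p (\<sigma> ! t')) \<and>
        (\<forall>t < length \<sigma>. \<forall>b < k.
            (\<Sum>t'\<in>{t'. t' < t \<and> l (\<sigma> ! t') = l (\<sigma> ! t)}. p (\<sigma> ! t'))
          \<le> (\<Sum>t'\<in>{t'. t' < t \<and> l (\<sigma> ! t') = b}. p (\<sigma> ! t'))))"

text \<open>Number of bags for subset F_i (0-indexed): the first (m mod mh) subsets
  (the largest ones) get ceil(m/mh) bags, the others floor(m/mh); total is m.\<close>
definition nbags :: "nat \<Rightarrow> nat \<Rightarrow> nat \<Rightarrow> nat" where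
  "nbags m mh i = (if i < m mod mh then m div mh + 1 else m div mh)"

definition bag_offset :: "nat \<Rightarrow> nat \<Rightarrow> nat \<Rightarrow> nat" where
  "bag_offset m mh i = (\<Sum>i'<i. nbags m mh i')"

definition alg_output ::
  "real \<Rightarrow> (nat \<Rightarrow> real) \<Rightarrow> nat \<Rightarrow> nat \<Rightarrow> nat \<Rightarrow> (nat \<Rightarrow> nat) \<Rightarrow> bool" where
  "alg_output eps p n m mh bag \<longleftrightarrow>
     (\<exists>F l. (\<forall>j<n. F j < mh) \<and>
        makespan p n mh F \<le> (1 + eps) * opt p n mh \<and>
        (\<forall>i i'. i \<le> i' \<and> i' < mh \<longrightarrow> load p n F i \<ge> load p n F i') \<and>
        (\<forall>i<mh. is_LPT p {j. j < n \<and> F j = i} (nbags m mh i) l) \<and>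
        (\<forall>j<n. bag j = bag_offset m mh (F j) + l j))"

end

theory Submission
  imports Defs
begin

(* Consistency: collecting the bags of each PTAS subset F_i on one machine
   reproduces the PTAS schedule on mh machines.

   Robustness: the last job that LPT puts into a bag of F_i found that bag least loaded
   among the k \<ge> m div mh bags of F_i, so k times the bag load is at most
   p(F_i) + (k - 1) p_max. As p_max \<le> opt(m) and
   p(F_i) \<le> (1 + eps) opt(mh) \<le> (1 + eps) (m div mh + 1) opt(m) (merge blocks of
   m div mh + 1 machines), every bag is at most 2 (1 + eps) opt(m) \<le> 2 (1 + eps) opt(m_0).
   Assign the bags to m_0 machines minimising the sum of squared loads. A machine then
   holds a single nonempty bag, or moving its smaller nonempty bag elsewhere does not help, so
   every other machine carries at least half its load; hence its load is at most
   2 (total processing time) / (m_0 + 1) \<le> 2 opt(m_0). *)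

section \<open>Loads and optimal makespans\<close>

lemma load_conv_sum: "load p n a i = (\<Sum>j<n. if a j = i then p j else 0)"
  unfolding load_def by (rule trans[OF _ sum.inter_filter]) (auto intro: sum.cong)

lemma load_cong: "(\<And>j. j < n \<Longrightarrow> a j = b j) \<Longrightarrow> load p n a i = load p n b i"
  unfolding load_def by (auto intro: arg_cong[where f = "sum p"])

lemma makespan_cong: "(\<And>j. j < n \<Longrightarrow> a j = b j) \<Longrightarrow> makespan p n x a = makespan p n x b"
  unfolding makespan_def using load_cong[of n a b p] by simp

lemma load_nonneg: "\<forall>j<n. p j \<ge> 0 \<Longrightarrow> load p n a i \<ge> 0"
  unfolding load_def by (auto intro: sum_nonneg)

lemma load_le_makespan: "i < x \<Longrightarrow> load p n a i \<le> makespan p n x a"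
  unfolding makespan_def by (auto intro: Max_ge)

lemma makespan_leI: "1 \<le> x \<Longrightarrow> (\<And>i. i < x \<Longrightarrow> load p n a i \<le> B) \<Longrightarrow> makespan p n x a \<le> B"
  unfolding makespan_def by (subst Max_le_iff) (auto simp: lessThan_empty_iff)

lemma load_comp:
  assumes "\<And>j. j < n \<Longrightarrow> a j < m"
  shows "load p n (f \<circ> a) i = (\<Sum>y | y < m \<and> f y = i. load p n a y)"
proof -
  have "(\<Sum>y | y < m \<and> f y = i. load p n a y)
      = (\<Sum>y | y < m \<and> f y = i. sum p {j \<in> {j. j < n \<and> f (a j) = i}. a j = y})"
    unfolding load_def by (rule sum.cong) (auto intro: arg_cong[where f = "sum p"])
  also have "\<dots> = sum p {j. j < n \<and> f (a j) = i}"
    by (rule sum.group) (use assms in auto)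
  finally show ?thesis unfolding load_def by simp
qed

lemma sum_load:
  assumes "\<And>j. j < n \<Longrightarrow> a j < x"
  shows "(\<Sum>i<x. load p n a i) = (\<Sum>j<n. p j)"
proof -
  have "(\<Sum>i<x. load p n a i) = (\<Sum>i<x. sum p {j \<in> {..<n}. a j = i})"
    unfolding load_def by (rule sum.cong) auto
  also have "\<dots> = sum p {..<n}"
    by (rule sum.group) (use assms in auto)
  finally show ?thesis .
qed

lemma opt_attained:
  assumes "1 \<le> x"
  obtains a where "a \<in> {..<n} \<rightarrow>\<^sub>E {..<x}" and "opt p n x = makespan p n x a"
proof -
  have "{..<n} \<rightarrow>\<^sub>E {..<x} \<noteq> {}"
    using assms by (auto simp: PiE_eq_empty_iff lessThan_empty_iff)
  then have "opt p n x \<in> (\<lambda>a. makespan p n x a) ` ({..<n} \<rightarrow>\<^sub>E {..<x})"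
    unfolding opt_def by (intro Min_in) (auto simp: finite_PiE)
  then show ?thesis using that by blast
qed

lemma opt_le_makespan: "a \<in> {..<n} \<rightarrow>\<^sub>E {..<x} \<Longrightarrow> opt p n x \<le> makespan p n x a"
  unfolding opt_def by (rule Min_le) (auto simp: finite_PiE)

lemma alg_value_le_makespan:
  "g \<in> {..<m} \<rightarrow>\<^sub>E {..<m0} \<Longrightarrow> alg_value p n m bag m0 \<le> makespan p n m0 (g \<circ> bag)"
  unfolding alg_value_def by (rule Min_le) (auto simp: finite_PiE)

lemma sum_le_opt:
  assumes "1 \<le> x"
  shows "(\<Sum>j<n. p j) \<le> real x * opt p n x"
proof -
  obtain a where a: "a \<in> {..<n} \<rightarrow>\<^sub>E {..<x}" "opt p n x = makespan p n x a"
    using opt_attained[OF assms] .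
  have "(\<Sum>j<n. p j) = (\<Sum>i<x. load p n a i)"
    using a(1) by (subst sum_load) auto
  also have "\<dots> \<le> (\<Sum>i<x. makespan p n x a)"
    by (rule sum_mono) (auto intro: load_le_makespan)
  finally show ?thesis using a by simp
qed

lemma job_le_opt:
  assumes "1 \<le> x" "j < n" "\<forall>j<n. p j \<ge> 0"
  shows "p j \<le> opt p n x"
proof -
  obtain a where a: "a \<in> {..<n} \<rightarrow>\<^sub>E {..<x}" "opt p n x = makespan p n x a"
    using opt_attained[OF assms(1)] .
  have "p j \<le> load p n a (a j)"
    unfolding load_def using assms by (intro member_le_sum) auto
  also have "\<dots> \<le> makespan p n x a"
    using a(1) assms by (intro load_le_makespan) auto
  finally show ?thesis using a by simp
qed

lemma opt_nonneg: "1 \<le> x \<Longrightarrow> \<forall>j<n. p j \<ge> 0 \<Longrightarrow> opt p n x \<ge> 0"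
  by (metis opt_attained load_nonneg load_le_makespan order_trans less_le_trans zero_less_one)

lemma opt_antimono:
  assumes "1 \<le> x" "x \<le> y" "\<forall>j<n. p j \<ge> 0"
  shows "opt p n y \<le> opt p n x"
proof -
  obtain a where a: "a \<in> {..<n} \<rightarrow>\<^sub>E {..<x}" "opt p n x = makespan p n x a"
    using opt_attained[OF assms(1)] .
  have "a \<in> {..<n} \<rightarrow>\<^sub>E {..<y}"
    using a(1) assms by (force simp: PiE_iff)
  then have "opt p n y \<le> makespan p n y a"
    by (rule opt_le_makespan)
  also have "\<dots> \<le> makespan p n x a"
  proof (rule makespan_leI)
    fix i assume "i < y"
    show "load p n a i \<le> makespan p n x a"
    proof (cases "i < x")
      case False
      then have "load p n a i = 0"
        unfolding load_def using a(1) by (intro sum.neutral) auto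
      also have "\<dots> \<le> makespan p n x a"
        using a assms opt_nonneg by metis
      finally show ?thesis .
    qed (rule load_le_makespan)
  qed (use assms in auto)
  finally show ?thesis using a by simp
qed

lemma card_div_eq_le: "0 < c \<Longrightarrow> card {y. y < m \<and> y div c = i} \<le> (c::nat)"
proof -
  assume "0 < c"
  have "inj_on (\<lambda>y. y mod c) {y. y < m \<and> y div c = i}"
  proof (rule inj_onI)
    fix y y' assume "y \<in> {y. y < m \<and> y div c = i}" "y' \<in> {y. y < m \<and> y div c = i}"
      and "y mod c = y' mod c"
    then show "y = y'"
      using div_mult_mod_eq[of y c] div_mult_mod_eq[of y' c] by simp
  qed
  then have "card {y. y < m \<and> y div c = i} \<le> card {..<c}"
    using \<open>0 < c\<close> by (intro card_inj_on_le) auto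
  then show ?thesis by simp
qed

lemma opt_le_merge:
  assumes "1 \<le> x" "1 \<le> y" "\<forall>j<n. p j \<ge> 0"
  shows "opt p n x \<le> real (y div x + 1) * opt p n y"
proof -
  define c where "c = y div x + 1"
  obtain a where a: "a \<in> {..<n} \<rightarrow>\<^sub>E {..<y}" "opt p n y = makespan p n y a"
    using opt_attained[OF assms(2)] .
  have a_less: "a j < y" if "j < n" for j
    using a(1) that by auto
  have "y mod x < x"
    using assms(1) by simp
  moreover have "x * c = x * (y div x) + x"
    by (simp add: c_def)
  ultimately have "y < x * c"
    using mult_div_mod_eq[of x y] by linarith
  then have merged: "restrict (\<lambda>j. a j div c) {..<n} \<in> {..<n} \<rightarrow>\<^sub>E {..<x}"
    using a_less by (auto intro: less_mult_imp_div_less order.strict_trans)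
  have "opt p n x \<le> makespan p n x (restrict (\<lambda>j. a j div c) {..<n})"
    using merged by (rule opt_le_makespan)
  also have "\<dots> = makespan p n x ((\<lambda>b. b div c) \<circ> a)"
    by (rule makespan_cong) simp
  also have "\<dots> \<le> real c * makespan p n y a"
  proof (rule makespan_leI)
    fix i
    have "load p n ((\<lambda>b. b div c) \<circ> a) i = (\<Sum>b | b < y \<and> b div c = i. load p n a b)"
      using a_less by (rule load_comp)
    also have "\<dots> \<le> (\<Sum>b | b < y \<and> b div c = i. makespan p n y a)"
      by (rule sum_mono) (auto intro: load_le_makespan)
    also have "\<dots> \<le> real c * makespan p n y a"
      using card_div_eq_le[of c y i] a(2) opt_nonneg[OF assms(2,3)]
      by (simp add: c_def mult_right_mono)
    finally show "load p n ((\<lambda>b. b div c) \<circ> a) i \<le> real c * makespan p n y a" .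
  qed (use assms in auto)
  finally show ?thesis using a(2) by (simp add: c_def)
qed

section \<open>Numbering of the bags\<close>

lemma bag_offset_Suc: "bag_offset m mh (Suc i) = bag_offset m mh i + nbags m mh i"
  unfolding bag_offset_def by simp

lemma bag_offset_mono: "i \<le> i' \<Longrightarrow> bag_offset m mh i \<le> bag_offset m mh i'"
  unfolding bag_offset_def by (rule sum_mono2) auto

lemma bag_offset_total:
  assumes "1 \<le> mh"
  shows "bag_offset m mh mh = m"
proof -
  have "bag_offset m mh mh = (\<Sum>i<mh. m div mh + of_bool (i < m mod mh))"
    unfolding bag_offset_def nbags_def by (rule sum.cong) auto
  also have "\<dots> = mh * (m div mh) + card ({..<mh} \<inter> {..<m mod mh})"
    by (simp add: sum.distrib Int_def)
  also have "{..<mh} \<inter> {..<m mod mh} = {..<m mod mh}"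
    using assms by (auto intro: order.strict_trans[OF _ mod_less_divisor])
  finally show ?thesis by simp
qed

definition bag_owner :: "nat \<Rightarrow> nat \<Rightarrow> nat \<Rightarrow> nat" where
  "bag_owner m mh b = (LEAST i. b < bag_offset m mh (Suc i))"

lemma bag_owner_offset:
  assumes "c < nbags m mh i"
  shows "bag_owner m mh (bag_offset m mh i + c) = i"
  unfolding bag_owner_def
proof (rule Least_equality)
  show "bag_offset m mh i + c < bag_offset m mh (Suc i)"
    using assms by (simp add: bag_offset_Suc)
next
  fix i' assume "bag_offset m mh i + c < bag_offset m mh (Suc i')"
  then show "i \<le> i'"
    using bag_offset_mono[of "Suc i'" i m mh] by linarith
qed

lemma bag_owner_less:
  assumes "1 \<le> mh" "b < m"
  shows "bag_owner m mh b < mh"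
proof -
  have "b < bag_offset m mh (Suc (mh - 1))"
    using assms bag_offset_total[of mh m] by simp
  then have "bag_owner m mh b \<le> mh - 1"
    unfolding bag_owner_def by (rule Least_le)
  then show ?thesis using assms by simp
qed

lemma bag_offset_add_less:
  assumes "i < mh" "c < nbags m mh i"
  shows "bag_offset m mh i + c < m"
proof -
  have "bag_offset m mh i + c < bag_offset m mh (Suc i)"
    using assms by (simp add: bag_offset_Suc)
  also have "\<dots> \<le> bag_offset m mh mh"
    using assms by (intro bag_offset_mono) simp
  finally show ?thesis using assms bag_offset_total[of mh m] by simp
qed

section \<open>The LPT bag bound\<close>

lemma greedy_load_bound:
  fixes q :: "nat \<Rightarrow> real" and lab :: "nat \<Rightarrow> nat"
  assumes q_nonneg: "\<And>t. t < N \<Longrightarrow> 0 \<le> q t" and q_le: "\<And>t. t < N \<Longrightarrow> q t \<le> Q" "0 \<le> Q"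
    and lab_less: "\<And>t. t < N \<Longrightarrow> lab t < k"
    and least_loaded: "\<And>t b. t < N \<Longrightarrow> b < k \<Longrightarrow>
      (\<Sum>t' | t' < t \<and> lab t' = lab t. q t') \<le> (\<Sum>t' | t' < t \<and> lab t' = b. q t')"
    and "c < k"
  shows "real k * (\<Sum>t | t < N \<and> lab t = c. q t) \<le> (\<Sum>t<N. q t) + (real k - 1) * Q"
proof (cases "{t. t < N \<and> lab t = c} = {}")
  case True
  have "0 \<le> (\<Sum>t<N. q t)"
    using q_nonneg by (auto intro: sum_nonneg)
  then show ?thesis
    unfolding True using \<open>0 \<le> Q\<close> \<open>c < k\<close> by simp
next
  case False
  define A where "A = {t. t < N \<and> lab t = c}"
  define t0 where "t0 = Max A"
  have "finite A" unfolding A_def by simp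
  have t0_max: "t \<le> t0" if "t \<in> A" for t
    unfolding t0_def using \<open>finite A\<close> that by (rule Max_ge)
  have "t0 \<in> A"
    unfolding t0_def using \<open>finite A\<close> False A_def by (intro Max_in) auto
  then have t0: "t0 < N" "lab t0 = c"
    unfolding A_def by auto
  define L where "L = (\<Sum>t | t < t0 \<and> lab t = c. q t)"
  have "A = insert t0 {t. t < t0 \<and> lab t = c}"
    using \<open>t0 \<in> A\<close> t0_max t0 unfolding A_def by fastforce
  then have sum_A: "(\<Sum>t\<in>A. q t) = q t0 + L"
    unfolding L_def by simp
  \<comment> \<open>when t0 was added, bag c was a least loaded one of the k bags\<close>
  have "real k * L = (\<Sum>b<k. L)" by simp
  also have "\<dots> \<le> (\<Sum>b<k. \<Sum>t | t \<in> {..<t0} \<and> lab t = b. q t)"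
    using least_loaded[OF t0(1)] t0(2) unfolding L_def by (intro sum_mono) auto
  also have "\<dots> = (\<Sum>t<t0. q t)"
    by (rule sum.group) (use lab_less t0 in auto)
  finally have "real k * L \<le> (\<Sum>t<t0. q t)" .
  moreover have "(\<Sum>t<t0. q t) + q t0 \<le> (\<Sum>t<N. q t)"
    using t0 q_nonneg by (subst sum.lessThan_Suc[symmetric]) (intro sum_mono2, auto)
  moreover have "(real k - 1) * q t0 \<le> (real k - 1) * Q"
    using \<open>c < k\<close> q_le t0 by (intro mult_left_mono) auto
  ultimately show ?thesis
    unfolding A_def[symmetric] sum_A by (simp add: algebra_simps)
qed

lemma is_LPT_load_bound:
  assumes "is_LPT p S k l" "c < k"
    and "\<forall>j\<in>S. 0 \<le> p j" "\<forall>j\<in>S. p j \<le> Q" "0 \<le> Q"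
  shows "real k * (\<Sum>j | j \<in> S \<and> l j = c. p j) \<le> (\<Sum>j\<in>S. p j) + (real k - 1) * Q"
proof -
  from assms(1) obtain \<sigma> where l_less: "\<forall>j\<in>S. l j < k" and "distinct \<sigma>" "set \<sigma> = S"
    and least_loaded: "\<forall>t < length \<sigma>. \<forall>b < k.
      (\<Sum>t' | t' < t \<and> l (\<sigma> ! t') = l (\<sigma> ! t). p (\<sigma> ! t'))
        \<le> (\<Sum>t' | t' < t \<and> l (\<sigma> ! t') = b. p (\<sigma> ! t'))"
    unfolding is_LPT_def by blast
  define N where "N = length \<sigma>"
  have reindex: "(\<Sum>j | j \<in> S \<and> P j. p j) = (\<Sum>t | t < N \<and> P (\<sigma> ! t). p (\<sigma> ! t))" for P
  proof (rule sum.reindex_cong)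
    show "inj_on (nth \<sigma>) {t. t < N \<and> P (\<sigma> ! t)}"
      using \<open>distinct \<sigma>\<close> unfolding N_def by (intro inj_on_nth) auto
    show "{j. j \<in> S \<and> P j} = nth \<sigma> ` {t. t < N \<and> P (\<sigma> ! t)}"
      using \<open>set \<sigma> = S\<close> unfolding N_def by (auto simp: in_set_conv_nth)
  qed simp
  have "real k * (\<Sum>t | t < N \<and> l (\<sigma> ! t) = c. p (\<sigma> ! t)) \<le> (\<Sum>t<N. p (\<sigma> ! t)) + (real k - 1) * Q"
    by (rule greedy_load_bound[where lab = "\<lambda>t. l (\<sigma> ! t)"])
      (use assms l_less least_loaded \<open>set \<sigma> = S\<close> in \<open>auto simp: N_def\<close>)
  then show ?thesis
    using reindex[of "\<lambda>j. l j = c"] reindex[of "\<lambda>_. True"] by (simp add: lessThan_def)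
qed

section \<open>Scheduling bags by local search\<close>

lemma load_fun_upd:
  assumes "b < N"
  shows "load s N (h(b := y)) z
    = load s N h z - (if h b = z then s b else 0) + (if y = z then s b else 0)"
proof -
  have "(\<Sum>j\<in>{..<N} - {b}. if (h(b := y)) j = z then s j else 0)
      = (\<Sum>j\<in>{..<N} - {b}. if h j = z then s j else 0)"
    by (rule sum.cong) auto
  then show ?thesis
    unfolding load_conv_sum using assms
    by (simp add: sum.remove[of "{..<N}" b])
qed

definition load_potential :: "(nat \<Rightarrow> real) \<Rightarrow> nat \<Rightarrow> nat \<Rightarrow> (nat \<Rightarrow> nat) \<Rightarrow> real" where
  "load_potential s N x h = (\<Sum>z<x. (load s N h z)\<^sup>2)"

lemma load_potential_fun_upd:
  assumes "b < N" "h b < x" "y < x" "y \<noteq> h b"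
  shows "load_potential s N x (h(b := y)) - load_potential s N x h
    = 2 * s b * (load s N h y + s b - load s N h (h b))"
proof -
  define d where "d z = (load s N (h(b := y)) z)\<^sup>2 - (load s N h z)\<^sup>2" for z
  have "load_potential s N x (h(b := y)) - load_potential s N x h = (\<Sum>z<x. d z)"
    unfolding load_potential_def d_def by (simp add: sum_subtractf)
  also have "\<dots> = (\<Sum>z\<in>{h b, y}. d z)"
    by (rule sum.mono_neutral_right) (use assms in \<open>auto simp: d_def load_fun_upd\<close>)
  also have "\<dots> = 2 * s b * (load s N h y + s b - load s N h (h b))"
    using assms by (simp add: d_def load_fun_upd power2_eq_square algebra_simps)
  finally show ?thesis .
qed

lemma load_potential_min_imp_no_improving_move:
  assumes "h \<in> {..<N} \<rightarrow>\<^sub>E {..<x}"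
    and min: "\<And>h'. h' \<in> {..<N} \<rightarrow>\<^sub>E {..<x} \<Longrightarrow> load_potential s N x h \<le> load_potential s N x h'"
    and "b < N" "y < x" "y \<noteq> h b" "0 < s b"
  shows "load s N h (h b) - s b \<le> load s N h y"
proof -
  have "h(b := y) \<in> {..<N} \<rightarrow>\<^sub>E {..<x}"
    using assms by (auto simp: PiE_iff extensional_def)
  then have "0 \<le> load_potential s N x (h(b := y)) - load_potential s N x h"
    using min by simp
  also have "\<dots> = 2 * s b * (load s N h y + s b - load s N h (h b))"
    using assms by (intro load_potential_fun_upd) auto
  finally show ?thesis
    using \<open>0 < s b\<close> by (simp add: zero_le_mult_iff)
qed

lemma load_le_average_if_no_improving_move:
  fixes s :: "nat \<Rightarrow> real"
  assumes h: "h \<in> {..<N} \<rightarrow>\<^sub>E {..<x}"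
    and no_move: "\<And>b y. b < N \<Longrightarrow> y < x \<Longrightarrow> y \<noteq> h b \<Longrightarrow> 0 < s b \<Longrightarrow>
      load s N h (h b) - s b \<le> load s N h y"
    and "b < N" "0 < s b" "2 * s b \<le> load s N h (h b)"
  shows "real (x + 1) * load s N h (h b) \<le> 2 * (\<Sum>b<N. s b)"
proof -
  define T where "T = load s N h (h b)"
  have "h b < x"
    using h \<open>b < N\<close> by auto
  have "(\<Sum>b<N. s b) = (\<Sum>z<x. load s N h z)"
    by (rule sum_load[symmetric]) (use h in auto)
  also have "\<dots> = T + (\<Sum>z\<in>{..<x} - {h b}. load s N h z)"
    unfolding T_def using \<open>h b < x\<close> by (simp add: sum.remove[of _ "h b"])
  finally have total: "(\<Sum>b<N. s b) = T + (\<Sum>z\<in>{..<x} - {h b}. load s N h z)" .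
  have "(\<Sum>z\<in>{..<x} - {h b}. T - s b) \<le> (\<Sum>z\<in>{..<x} - {h b}. load s N h z)"
    using no_move \<open>b < N\<close> \<open>0 < s b\<close> unfolding T_def by (intro sum_mono) auto
  moreover have "(\<Sum>z\<in>{..<x} - {h b}. T - s b) = (real x - 1) * (T - s b)"
    using \<open>h b < x\<close> by (simp add: of_nat_diff)
  moreover have "(real x - 1) * (T / 2) \<le> (real x - 1) * (T - s b)"
    using assms(5) \<open>h b < x\<close> unfolding T_def by (intro mult_left_mono) auto
  ultimately show ?thesis
    using total unfolding T_def by (simp add: field_simps)
qed

lemma load_bound_if_no_improving_move:
  fixes s :: "nat \<Rightarrow> real"
  assumes h: "h \<in> {..<N} \<rightarrow>\<^sub>E {..<x}" and "x' < x"
    and s_nonneg: "\<forall>b<N. 0 \<le> s b" and s_le: "\<forall>b<N. s b \<le> M"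
    and no_move: "\<And>b y. b < N \<Longrightarrow> y < x \<Longrightarrow> y \<noteq> h b \<Longrightarrow> 0 < s b \<Longrightarrow>
      load s N h (h b) - s b \<le> load s N h y"
  shows "load s N h x' \<le> M \<or> real (x + 1) * load s N h x' \<le> 2 * (\<Sum>b<N. s b)"
proof -
  define P where "P = {b. b < N \<and> h b = x' \<and> 0 < s b}"
  have load_P: "load s N h x' = sum s P"
    unfolding load_def P_def using s_nonneg by (intro sum.mono_neutral_right) (auto simp: less_le)
  show ?thesis
  proof (cases "\<exists>b\<in>P. \<exists>b'\<in>P. b \<noteq> b'")
    case True
    then obtain b b' where "b \<in> P" "b' \<in> P" "b \<noteq> b'" "s b \<le> s b'"
      by (metis linorder_le_cases)
    have "2 * s b \<le> sum s {b, b'}"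
      using \<open>b \<noteq> b'\<close> \<open>s b \<le> s b'\<close> by simp
    also have "\<dots> \<le> load s N h x'"
      unfolding load_P using \<open>b \<in> P\<close> \<open>b' \<in> P\<close> s_nonneg
      by (intro sum_mono2) (auto simp: P_def)
    finally show ?thesis
      using load_le_average_if_no_improving_move[OF h no_move, of b] \<open>b \<in> P\<close>
      unfolding P_def by auto
  next
    case False
    then have "P = {} \<or> (\<exists>b. P = {b})"
      by blast
    then show ?thesis
    proof
      assume "P = {}"
      then show ?thesis
        using load_P s_nonneg by (auto intro: sum_nonneg)
    next
      assume "\<exists>b. P = {b}"
      then obtain b where "P = {b}" ..
      then show ?thesis
        using load_P s_le unfolding P_def by auto
    qed
  qed
qed

lemma exists_balanced_assignment:
  fixes s :: "nat \<Rightarrow> real"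
  assumes "1 \<le> x" "\<forall>b<N. 0 \<le> s b" "\<forall>b<N. s b \<le> M"
  obtains h where "h \<in> {..<N} \<rightarrow>\<^sub>E {..<x}"
    and "\<And>x'. x' < x \<Longrightarrow> load s N h x' \<le> M \<or> real (x + 1) * load s N h x' \<le> 2 * (\<Sum>b<N. s b)"
proof -
  let ?H = "{..<N} \<rightarrow>\<^sub>E {..<x}"
  have "finite ?H" "?H \<noteq> {}"
    using assms(1) by (auto simp: finite_PiE PiE_eq_empty_iff lessThan_empty_iff)
  then obtain h where h: "h \<in> ?H"
    and min: "\<And>h'. h' \<in> ?H \<Longrightarrow> load_potential s N x h \<le> load_potential s N x h'"
    by (metis arg_min_if_finite(1) arg_min_least)
  show ?thesis
  proof (rule that[OF h])
    fix x' assume "x' < x"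
    then show "load s N h x' \<le> M \<or> real (x + 1) * load s N h x' \<le> 2 * (\<Sum>b<N. s b)"
      using h assms load_potential_min_imp_no_improving_move[OF h min]
      by (intro load_bound_if_no_improving_move) auto
  qed
qed

lemma alg_value_le_if_bag_loads_le:
  assumes p_nonneg: "\<forall>j<n. p j \<ge> 0" and bag_less: "\<And>j. j < n \<Longrightarrow> bag j < m" and "1 \<le> m0"
    and bag_le: "\<And>b. b < m \<Longrightarrow> load p n bag b \<le> M" and "2 * opt p n m0 \<le> M"
  shows "alg_value p n m bag m0 \<le> M"
proof -
  define s where "s = load p n bag"
  have "\<forall>b<m. 0 \<le> s b" "\<forall>b<m. s b \<le> M"
    unfolding s_def using load_nonneg[OF p_nonneg] bag_le by auto
  then obtain h where h: "h \<in> {..<m} \<rightarrow>\<^sub>E {..<m0}"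
    and balanced: "\<And>x'. x' < m0 \<Longrightarrow> load s m h x' \<le> M \<or> real (m0 + 1) * load s m h x' \<le> 2 * (\<Sum>b<m. s b)"
    using exists_balanced_assignment[OF \<open>1 \<le> m0\<close>] by blast
  have "(\<Sum>b<m. s b) \<le> real m0 * opt p n m0"
    unfolding s_def using sum_load[of n bag m p, OF bag_less] sum_le_opt[OF \<open>1 \<le> m0\<close>] by simp
  moreover have "0 \<le> opt p n m0"
    using opt_nonneg[OF \<open>1 \<le> m0\<close> p_nonneg] .
  ultimately have "load s m h x' \<le> M" if "x' < m0" for x'
  proof -
    have "real (m0 + 1) * load s m h x' \<le> real (m0 + 1) * (2 * opt p n m0)"
      if "real (m0 + 1) * load s m h x' \<le> 2 * (\<Sum>b<m. s b)"
      using that \<open>(\<Sum>b<m. s b) \<le> real m0 * opt p n m0\<close> \<open>0 \<le> opt p n m0\<close>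
      by (simp add: algebra_simps)
    then show ?thesis
      using balanced[OF \<open>x' < m0\<close>] \<open>2 * opt p n m0 \<le> M\<close> by (auto simp: mult_le_cancel_left_pos)
  qed
  moreover have "load p n (h \<circ> bag) x' = load s m h x'" for x'
    using load_comp[of n bag m p h x', OF bag_less] unfolding s_def load_def[of "load p n bag"] by simp
  ultimately have "makespan p n m0 (h \<circ> bag) \<le> M"
    using \<open>1 \<le> m0\<close> by (intro makespan_leI) auto
  then show ?thesis
    using alg_value_le_makespan[OF h, of p n bag] by simp
qed

section \<open>The two-stage partition\<close>

locale two_stage_partition =
  fixes eps :: real and p :: "nat \<Rightarrow> real" and n m mh :: nat and F l bag :: "nat \<Rightarrow> nat"
  assumes eps_nonneg: "0 \<le> eps"
    and p_nonneg: "\<forall>j<n. p j \<ge> 0"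
    and mh_pos: "1 \<le> mh" and mh_le_m: "mh \<le> m"
    and F_less: "\<And>j. j < n \<Longrightarrow> F j < mh"
    and F_makespan: "makespan p n mh F \<le> (1 + eps) * opt p n mh"
    and F_LPT: "\<And>i. i < mh \<Longrightarrow> is_LPT p {j. j < n \<and> F j = i} (nbags m mh i) l"
    and bag_eq: "\<And>j. j < n \<Longrightarrow> bag j = bag_offset m mh (F j) + l j"
begin

lemma l_less: "j < n \<Longrightarrow> l j < nbags m mh (F j)"
  using F_LPT[OF F_less] unfolding is_LPT_def by auto

lemma bag_less: "j < n \<Longrightarrow> bag j < m"
  using bag_eq F_less l_less bag_offset_add_less by simp

lemma bag_owner_bag: "j < n \<Longrightarrow> bag_owner m mh (bag j) = F j"
  using bag_eq l_less bag_owner_offset by simp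

lemma consistent: "alg_value p n m bag mh \<le> (1 + eps) * opt p n mh"
proof -
  define g where "g = restrict (bag_owner m mh) {..<m}"
  have "g \<in> {..<m} \<rightarrow>\<^sub>E {..<mh}"
    unfolding g_def using bag_owner_less[OF mh_pos] by auto
  then have "alg_value p n m bag mh \<le> makespan p n mh (g \<circ> bag)"
    by (rule alg_value_le_makespan)
  also have "\<dots> = makespan p n mh F"
    unfolding g_def using bag_less bag_owner_bag by (intro makespan_cong) simp
  finally show ?thesis
    using F_makespan by simp
qed

lemma bag_members:
  assumes "i < mh" "c < nbags m mh i"
  shows "{j. j < n \<and> bag j = bag_offset m mh i + c} = {j. j < n \<and> F j = i \<and> l j = c}"
proof -
  have "F j = i \<and> l j = c" if "j < n" "bag j = bag_offset m mh i + c" for j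
  proof -
    have "F j = i"
      using that bag_owner_bag[of j] bag_owner_offset[OF assms(2)] by simp
    then show ?thesis
      using that bag_eq by simp
  qed
  then show ?thesis
    using bag_eq by auto
qed

lemma one_le_m: "1 \<le> m"
  using mh_pos mh_le_m by simp

lemma one_le_nbags: "1 \<le> nbags m mh i"
  using mh_pos mh_le_m div_greater_zero_iff[of m mh] unfolding nbags_def by simp

lemma subset_load_le:
  assumes "i < mh"
  shows "load p n F i \<le> (1 + eps) * (real (nbags m mh i + 1) * opt p n m)"
proof -
  have "load p n F i \<le> (1 + eps) * opt p n mh"
    using load_le_makespan[OF assms] F_makespan by (rule order_trans)
  also have "\<dots> \<le> (1 + eps) * (real (m div mh + 1) * opt p n m)"
    using opt_le_merge[OF mh_pos one_le_m p_nonneg] eps_nonneg by (intro mult_left_mono) auto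
  also have "\<dots> \<le> (1 + eps) * (real (nbags m mh i + 1) * opt p n m)"
    using eps_nonneg opt_nonneg[OF one_le_m p_nonneg]
    by (intro mult_left_mono mult_right_mono) (auto simp: nbags_def)
  finally show ?thesis .
qed

lemma bag_load_le:
  assumes "b < m"
  shows "load p n bag b \<le> 2 * (1 + eps) * opt p n m"
proof (cases "\<exists>j<n. bag j = b")
  case False
  then have "load p n bag b = 0"
    unfolding load_def by (intro sum.neutral) auto
  then show ?thesis
    using opt_nonneg[OF one_le_m p_nonneg] eps_nonneg by simp
next
  case True
  then obtain j0 where "j0 < n" "bag j0 = b"
    by blast
  define i where "i = F j0"
  define k where "k = nbags m mh i"
  define Q where "Q = opt p n m"
  have "i < mh" "l j0 < k" "b = bag_offset m mh i + l j0"
    using F_less l_less bag_eq \<open>j0 < n\<close> \<open>bag j0 = b\<close> unfolding i_def k_def by auto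
  have "0 \<le> Q"
    unfolding Q_def using opt_nonneg[OF one_le_m p_nonneg] .
  have "real k * load p n bag b = real k * (\<Sum>j | j \<in> {j. j < n \<and> F j = i} \<and> l j = l j0. p j)"
    unfolding load_def \<open>b = _\<close> bag_members[OF \<open>i < mh\<close> \<open>l j0 < k\<close>[unfolded k_def]]
    by (simp add: conj_assoc)
  also have "\<dots> \<le> load p n F i + (real k - 1) * Q"
    unfolding k_def Q_def load_def
    using F_LPT[OF \<open>i < mh\<close>] \<open>l j0 < k\<close> p_nonneg job_le_opt[OF one_le_m _ p_nonneg] \<open>0 \<le> Q\<close>
    by (intro is_LPT_load_bound) (auto simp: k_def Q_def)
  also have "\<dots> \<le> (1 + eps) * (real (k + 1) * Q) + (real k - 1) * Q"
    using subset_load_le[OF \<open>i < mh\<close>] unfolding k_def Q_def by simp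
  also have "\<dots> = real k * (2 * (1 + eps) * Q) - (real k - 1) * eps * Q"
    by (simp add: algebra_simps)
  also have "\<dots> \<le> real k * (2 * (1 + eps) * Q)"
    using one_le_nbags[of i] eps_nonneg \<open>0 \<le> Q\<close> unfolding k_def by simp
  finally show ?thesis
    using one_le_nbags[of i] unfolding k_def Q_def by simp
qed

lemma robust:
  assumes "1 \<le> m0" "m0 \<le> m"
  shows "alg_value p n m bag m0 \<le> 2 * (1 + eps) * opt p n m0"
proof (rule alg_value_le_if_bag_loads_le[OF p_nonneg bag_less \<open>1 \<le> m0\<close>])
  fix b assume "b < m"
  have "load p n bag b \<le> 2 * (1 + eps) * opt p n m"
    using bag_load_le[OF \<open>b < m\<close>] .
  also have "\<dots> \<le> 2 * (1 + eps) * opt p n m0"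
    using opt_antimono[OF assms p_nonneg] eps_nonneg by simp
  finally show "load p n bag b \<le> 2 * (1 + eps) * opt p n m0" .
next
  show "2 * opt p n m0 \<le> 2 * (1 + eps) * opt p n m0"
    using mult_nonneg_nonneg[OF eps_nonneg opt_nonneg[OF \<open>1 \<le> m0\<close> p_nonneg]]
    by (simp add: algebra_simps)
qed

end

theorem theorem5:
  fixes eps :: real and p :: "nat \<Rightarrow> real" and n m mh :: nat and bag :: "nat \<Rightarrow> nat"
  assumes "eps > 0"
    and "\<forall>j<n. p j \<ge> 0"
    and "1 \<le> mh" and "mh \<le> m"
    and "alg_output eps p n m mh bag"
  shows "alg_value p n m bag mh \<le> (1 + eps) * opt p n mh \<and>
         (\<forall>m0. 1 \<le> m0 \<and> m0 \<le> m \<longrightarrow> alg_value p n m bag m0 \<le> 2 * (1 + eps) * opt p n m0)"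
proof -
  from assms(5) obtain F l where "\<forall>j<n. F j < mh"
    and "makespan p n mh F \<le> (1 + eps) * opt p n mh"
    and "\<forall>i<mh. is_LPT p {j. j < n \<and> F j = i} (nbags m mh i) l"
    and "\<forall>j<n. bag j = bag_offset m mh (F j) + l j"
    unfolding alg_output_def by blast
  then interpret two_stage_partition eps p n m mh F l bag
    using assms(1-4) by unfold_locales auto
  show ?thesis
    using consistent robust by blast
qed

end
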